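(* The Laplacian on an infinite, connected, locally finite weighted graph $\Gamma$ is surjective onto $\mathbb{R}^\Gamma$. Consequently, the Laplacian on a locally finite weighted graph $\Gamma$ is surjective onto $\mathbb{R}^\Gamma$ if and only if every connected component of $\Gamma$ is infinite.
   Context: A weighted graph is an undirected graph without loops or multiple edges in which each edge $xy$ carries a weight $\omega_{xy}=\omega_{yx}>0$; the degree of a vertex is $\deg x=\sum_{y\sim x}\omega_{xy}$. The Laplacian is the linear map $\Delta:\mathbb{R}^\Gamma\to\mathbb{R}^\Gamma$, $\Delta f(x)=f(x)-\frac{1}{\deg x}\sum_{y\sim x}\omega_{xy}f(y)$, where $\mathbb{R}^\Gamma$ is the space of all real functions on the vertex set. *)

theory Defs
  imports Complex_Main
begin

definition weighted_graph :: "('a \<Rightarrow> 'a \<Rightarrow> real) \<Rightarrow> bool" where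
  "weighted_graph w \<longleftrightarrow>
     (\<forall>x y. w x y = w y x) \<and> (\<forall>x y. 0 \<le> w x y) \<and> (\<forall>x. w x x = 0)"

definition adj :: "('a \<Rightarrow> 'a \<Rightarrow> real) \<Rightarrow> 'a \<Rightarrow> 'a \<Rightarrow> bool" where
  "adj w x y \<longleftrightarrow> 0 < w x y"

definition neighbors :: "('a \<Rightarrow> 'a \<Rightarrow> real) \<Rightarrow> 'a \<Rightarrow> 'a set" where
  "neighbors w x = {y. adj w x y}"

definition locally_finite :: "('a \<Rightarrow> 'a \<Rightarrow> real) \<Rightarrow> bool" where
  "locally_finite w \<longleftrightarrow> (\<forall>x. finite (neighbors w x))"

definition deg :: "('a \<Rightarrow> 'a \<Rightarrow> real) \<Rightarrow> 'a \<Rightarrow> real" where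
  "deg w x = (\<Sum>y\<in>neighbors w x. w x y)"

definition laplacian :: "('a \<Rightarrow> 'a \<Rightarrow> real) \<Rightarrow> ('a \<Rightarrow> real) \<Rightarrow> 'a \<Rightarrow> real" where
  "laplacian w f x = f x - (1 / deg w x) * (\<Sum>y\<in>neighbors w x. w x y * f y)"

definition reachable :: "('a \<Rightarrow> 'a \<Rightarrow> real) \<Rightarrow> 'a \<Rightarrow> 'a \<Rightarrow> bool" where
  "reachable w = (adj w)\<^sup>*\<^sup>*"

definition connected_graph :: "('a \<Rightarrow> 'a \<Rightarrow> real) \<Rightarrow> bool" where
  "connected_graph w \<longleftrightarrow> (\<forall>x y. reachable w x y)"

definition component :: "('a \<Rightarrow> 'a \<Rightarrow> real) \<Rightarrow> 'a \<Rightarrow> 'a set" where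
  "component w x = {y. reachable w x y}"

end

theory Submission
  imports Defs "HOL-Library.Function_Algebras" "HOL-Library.Indicator_Function"
begin

text \<open>Multiplying by the degree, it suffices to show that the combinatorial Laplacian
  \<open>L f x = deg x * f x - (\<Sum>y\<sim>x. w x y * f y)\<close> is onto on each infinite component, and the
  problem decouples over components. Exhaust an infinite component by the balls \<open>A n\<close> around a
  vertex. Every vertex of the finite set \<open>A n\<close> is connected to a vertex outside it, so by the maximum
  principle \<open>L\<close>, viewed on functions supported on \<open>A n\<close> and read off on \<open>A n\<close>, is injective,
  hence surjective: the equation \<open>L f = h\<close> has solutions on every \<open>A n\<close>. These solution sets \<open>S n\<close>
  are cosets of decreasing kernels \<open>K n\<close>. Restricted to a fixed finite ball, the kernels form a
  descending chain of subspaces of a finite-dimensional space, which stabilises; this Mittag-Leffler condition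
  lets one choose compatible restrictions and glue them into a global solution.
  Conversely, on a finite component the symmetry of the weights makes \<open>\<Sum>x. L f x\<close> vanish, so
  \<open>L f = deg\<close>, i.e. \<open>\<Delta> f = 1\<close>, has no solution.\<close>

context vector_space
begin

lemma finite_basis_of_subset_span:
  assumes "finite F" and "T \<subseteq> span F"
  obtains B where "B \<subseteq> T" "independent B" "T \<subseteq> span B" "card B = dim T" "finite B"
proof -
  obtain B where B: "B \<subseteq> T" "independent B" "T \<subseteq> span B" "card B = dim T"
    by (rule basis_exists)
  moreover have "finite B"
    using independent_span_bound[OF assms(1) B(2)] B(1) assms(2) by blast
  ultimately show thesis by (rule that)
qed

lemma card_le_dim_of_subset_span:
  assumes "finite F" and "T \<subseteq> span F" and "independent C" and "C \<subseteq> T"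
  shows "card C \<le> dim T"
proof -
  obtain B where "T \<subseteq> span B" "card B = dim T" "finite B"
    using finite_basis_of_subset_span[OF assms(1,2)] .
  then show ?thesis using independent_span_bound[of B C] assms(3,4) by auto
qed

lemma subspace_eq_of_dim_le:
  assumes "finite F" and "T \<subseteq> span F" and "S \<subseteq> T" and "subspace S"
    and "dim T \<le> dim S"
  shows "S = T"
proof (rule ccontr)
  assume "S \<noteq> T"
  with assms(3) obtain v where v: "v \<in> T" "v \<notin> S" by blast
  have "S \<subseteq> span F" using assms(2,3) by blast
  then obtain B where B: "B \<subseteq> S" "independent B" "S \<subseteq> span B" "card B = dim S" "finite B"
    by (rule finite_basis_of_subset_span[OF assms(1)])
  have "v \<notin> span B" using span_minimal[OF B(1) assms(4)] v(2) by blast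
  then have "independent (insert v B)" and "v \<notin> B"
    using independent_insertI[OF _ B(2)] span_base by auto
  moreover have "insert v B \<subseteq> T" using v(1) B(1) assms(3) by blast
  ultimately have "card (insert v B) \<le> dim T"
    using card_le_dim_of_subset_span[OF assms(1,2)] by simp
  then show False using B(4,5) \<open>v \<notin> B\<close> assms(5) by simp
qed

lemma antimono_subspaces_stabilize:
  assumes "finite F" and "\<And>n. K n \<subseteq> span F" and "\<And>n. subspace (K n)" and "antimono K"
  shows "\<exists>N. \<forall>m\<ge>N. K m = K N"
proof -
  define d where "d = (LEAST d. \<exists>n. dim (K n) = d)"
  obtain N where N: "dim (K N) = d"
    using LeastI_ex[of "\<lambda>d. \<exists>n. dim (K n) = d"] unfolding d_def by blast
  have "K m = K N" if "N \<le> m" for m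
  proof (rule subspace_eq_of_dim_le[OF assms(1,2) _ assms(3)])
    show "K m \<subseteq> K N" using \<open>antimono K\<close> that by (simp add: antimonoD)
    show "dim (K N) \<le> dim (K m)" unfolding N d_def by (blast intro: Least_le)
  qed
  then show ?thesis by blast
qed

lemma linear_inj_on_imp_image_eq:
  assumes "finite F" and "T \<subseteq> span F" and "subspace T"
    and "module_hom scale scale L" and "L ` T \<subseteq> T" and "inj_on L T"
  shows "L ` T = T"
proof (rule subspace_eq_of_dim_le[OF assms(1,2,5)])
  interpret L: module_hom scale scale L by fact
  show "subspace (L ` T)" using L.subspace_image[OF assms(3)] .
  obtain B where B: "B \<subseteq> T" "independent B" "card B = dim T"
    using finite_basis_of_subset_span[OF assms(1,2)] .
  have inj: "inj_on L (span B)"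
    using inj_on_subset[OF assms(6) span_minimal[OF B(1) assms(3)]] .
  have "independent (L ` B)"
    using L.independent_injective_image[OF B(2) inj] .
  moreover have "card (L ` B) = card B"
    using card_image[OF inj_on_subset[OF inj span_superset]] .
  moreover have "L ` T \<subseteq> span F" using assms(2,5) by blast
  ultimately show "dim T \<le> dim (L ` T)"
    using card_le_dim_of_subset_span[OF assms(1), of "L ` T" "L ` B"] B(1,3) by auto
qed

end

definition scale_fun :: "real \<Rightarrow> ('a \<Rightarrow> real) \<Rightarrow> 'a \<Rightarrow> real" where
  "scale_fun c f = (\<lambda>x. c * f x)"

interpretation fun_space: vector_space "scale_fun :: real \<Rightarrow> ('a \<Rightarrow> real) \<Rightarrow> 'a \<Rightarrow> real"
  by unfold_locales (auto simp: scale_fun_def fun_eq_iff algebra_simps)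

definition supported_on :: "'a set \<Rightarrow> ('a \<Rightarrow> real) set" where
  "supported_on W = {f. \<forall>x. x \<notin> W \<longrightarrow> f x = 0}"

lemma supported_on_subset_span:
  assumes "finite W"
  shows "supported_on W \<subseteq> fun_space.span ((\<lambda>b. indicator {b}) ` W)"
proof
  fix f :: "'a \<Rightarrow> real" assume f: "f \<in> supported_on W"
  have "f = (\<Sum>b\<in>W. scale_fun (f b) (indicator {b}))"
  proof
    fix x
    have "(\<Sum>b\<in>W. scale_fun (f b) (indicator {b})) x = (\<Sum>b\<in>W. f b * indicator {b} x)"
      using assms by (induction W rule: finite_induct) (auto simp: scale_fun_def)
    also have "\<dots> = f x"
      using assms f by (cases "x \<in> W") (auto simp: supported_on_def indicator_def if_distrib Int_absorb1)
    finally show "f x = (\<Sum>b\<in>W. scale_fun (f b) (indicator {b})) x" by simp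
  qed
  then show "f \<in> fun_space.span ((\<lambda>b. indicator {b}) ` W)"
    by (metis (no_types, lifting) fun_space.span_base fun_space.span_scale fun_space.span_sum imageI)
qed

lemma subspace_supported_on: "fun_space.subspace (supported_on W)"
  by (auto simp: fun_space.subspace_def supported_on_def scale_fun_def)

lemma restriction_eventually_realizable:
  fixes S K :: "nat \<Rightarrow> ('a \<Rightarrow> real) set"
  assumes "finite B" and "\<And>n. S n \<noteq> {}" and "antimono S"
    and "\<And>n. fun_space.subspace (K n)" and "antimono K"
    and "\<And>n s s'. s \<in> S n \<Longrightarrow> s' \<in> S n \<Longrightarrow> s - s' \<in> K n"
    and "\<And>n s q. s \<in> S n \<Longrightarrow> q \<in> K n \<Longrightarrow> s + q \<in> S n"
  obtains N where "\<And>s m. s \<in> S N \<Longrightarrow> \<exists>s'\<in>S m. \<forall>x\<in>B. s' x = s x"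
proof -
  define R where "R f = (\<lambda>x. if x \<in> B then f x else 0)" for f :: "'a \<Rightarrow> real"
  interpret R: module_hom scale_fun scale_fun R
    by (unfold module_hom_iff)
      (auto simp: R_def scale_fun_def fun_eq_iff fun_space.module_axioms)
  have "\<exists>N. \<forall>m\<ge>N. R ` K m = R ` K N"
  proof (rule fun_space.antimono_subspaces_stabilize)
    show "finite ((\<lambda>b. indicator {b}) ` B)" using \<open>finite B\<close> by simp
    show "R ` K n \<subseteq> fun_space.span ((\<lambda>b. indicator {b}) ` B)" for n
      using supported_on_subset_span[OF \<open>finite B\<close>] by (auto simp: R_def supported_on_def)
    show "fun_space.subspace (R ` K n)" for n
      using R.subspace_image[OF assms(4)] .
    show "antimono (\<lambda>n. R ` K n)"
      using \<open>antimono K\<close> by (auto simp: antimono_def)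
  qed
  then obtain N where N: "\<And>m. N \<le> m \<Longrightarrow> R ` K m = R ` K N" by blast
  have realizable: "\<exists>s'\<in>S m. R s' = R s" if s: "s \<in> S N" for s m
  proof (cases "m \<le> N")
    case True
    then have "S N \<subseteq> S m" by (rule antimonoD[OF \<open>antimono S\<close>])
    then show ?thesis using s by blast
  next
    case False
    obtain sm where sm: "sm \<in> S m" using assms(2) by blast
    moreover have "S m \<subseteq> S N" using False by (intro antimonoD[OF \<open>antimono S\<close>]) simp
    ultimately have "s - sm \<in> K N" using assms(6) s by blast
    then have "R (s - sm) \<in> R ` K m" using N[of m] False by simp
    then obtain q where q: "R (s - sm) = R q" "q \<in> K m" by (rule imageE)
    have "sm + q \<in> S m" using assms(7) sm q(2) .
    moreover have "R (sm + q) = R s" using q(1) by (simp add: R.add R.diff algebra_simps)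
    ultimately show ?thesis by blast
  qed
  show thesis
  proof (rule that)
    fix s m assume "s \<in> S N"
    then obtain s' where "s' \<in> S m" "R s' = R s" using realizable by blast
    then show "\<exists>s'\<in>S m. \<forall>x\<in>B. s' x = s x" by (auto simp: R_def fun_eq_iff) (metis)
  qed
qed

lemma exists_fun_agreeing_with_nested_cosets:
  fixes S K :: "nat \<Rightarrow> ('a \<Rightarrow> real) set" and B :: "nat \<Rightarrow> 'a set"
  assumes "\<And>k. finite (B k)" and "mono B" and "\<And>n. S n \<noteq> {}" and "antimono S"
    and "\<And>n. fun_space.subspace (K n)" and "antimono K"
    and "\<And>n s s'. s \<in> S n \<Longrightarrow> s' \<in> S n \<Longrightarrow> s - s' \<in> K n"
    and "\<And>n s q. s \<in> S n \<Longrightarrow> q \<in> K n \<Longrightarrow> s + q \<in> S n"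
  shows "\<exists>f. \<forall>k. \<exists>s\<in>S k. \<forall>x\<in>B k. f x = s x"
proof -
  define realized where "realized k = {t. \<forall>m. \<exists>s\<in>S m. \<forall>x\<in>B k. s x = t x}" for k
  have "\<exists>N. S N \<subseteq> realized k" for k
  proof -
    obtain N where "\<And>s m. s \<in> S N \<Longrightarrow> \<exists>s'\<in>S m. \<forall>x\<in>B k. s' x = s x"
      using restriction_eventually_realizable[OF assms(1) assms(3-8)] by blast
    then show ?thesis by (auto simp: realized_def)
  qed
  then obtain N where N: "\<And>k. S (N k) \<subseteq> realized k" by metis
  have "\<exists>ts. \<forall>k. ts k \<in> realized k \<and> (\<forall>x\<in>B k. ts (Suc k) x = ts k x)"
  proof (rule dependent_nat_choice)
    show "\<exists>t. t \<in> realized 0" using N assms(3) by blast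
  next
    fix t k assume "t \<in> realized k"
    then obtain s where s: "s \<in> S (max (N k) (N (Suc k)))" "\<forall>x\<in>B k. s x = t x"
      by (auto simp: realized_def)
    moreover have "S (max (N k) (N (Suc k))) \<subseteq> S (N (Suc k))"
      using \<open>antimono S\<close> by (simp add: antimonoD)
    ultimately have "s \<in> realized (Suc k)" using N by blast
    with s(2) show "\<exists>t'. t' \<in> realized (Suc k) \<and> (\<forall>x\<in>B k. t' x = t x)" by blast
  qed
  then obtain ts
    where ts: "\<And>k. ts k \<in> realized k" "\<And>k x. x \<in> B k \<Longrightarrow> ts (Suc k) x = ts k x"
    by blast
  have coherent: "ts j x = ts k x" if "k \<le> j" "x \<in> B k" for j k x
    using that(1)
  proof (induction j rule: dec_induct)
    case (step j)
    have "B k \<subseteq> B j" using \<open>mono B\<close> step(1) by (simp add: monoD)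
    then show ?case using ts(2) that(2) step(3) by auto
  qed simp
  define f where "f x = ts (LEAST k. x \<in> B k) x" for x
  have "\<exists>s\<in>S k. \<forall>x\<in>B k. f x = s x" for k
  proof -
    obtain s where s: "s \<in> S k" "\<forall>x\<in>B k. s x = ts k x"
      using ts(1)[of k] by (auto simp: realized_def)
    have "f x = ts k x" if x: "x \<in> B k" for x
    proof -
      have "(LEAST k. x \<in> B k) \<le> k" and "x \<in> B (LEAST k. x \<in> B k)"
        using x by (rule Least_le, rule LeastI)
      then show ?thesis by (simp add: f_def coherent)
    qed
    with s show ?thesis by (metis (no_types))
  qed
  then show ?thesis by blast
qed

definition comb_laplacian :: "('a \<Rightarrow> 'a \<Rightarrow> real) \<Rightarrow> ('a \<Rightarrow> real) \<Rightarrow> 'a \<Rightarrow> real" where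
  "comb_laplacian w f x = deg w x * f x - (\<Sum>y\<in>neighbors w x. w x y * f y)"

lemma comb_laplacian_eq_sum:
  "comb_laplacian w f x = (\<Sum>y\<in>neighbors w x. w x y * (f x - f y))"
  by (simp add: comb_laplacian_def deg_def algebra_simps sum_subtractf sum_distrib_left)

lemma comb_laplacian_cong:
  "(\<And>y. y \<in> insert x (neighbors w x) \<Longrightarrow> f y = g y) \<Longrightarrow>
    comb_laplacian w f x = comb_laplacian w g x"
  unfolding comb_laplacian_def by (auto intro!: sum.cong)

lemma comb_laplacian_add: "comb_laplacian w (f + g) x = comb_laplacian w f x + comb_laplacian w g x"
  by (simp add: comb_laplacian_def algebra_simps sum.distrib)

lemma comb_laplacian_diff: "comb_laplacian w (f - g) x = comb_laplacian w f x - comb_laplacian w g x"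
  by (simp add: comb_laplacian_def algebra_simps sum_subtractf)

lemma comb_laplacian_scale: "comb_laplacian w (scale_fun c f) x = c * comb_laplacian w f x"
  by (simp add: comb_laplacian_def scale_fun_def algebra_simps sum_distrib_left)

lemma comb_laplacian_uminus: "comb_laplacian w (- f) x = - comb_laplacian w f x"
  by (simp add: comb_laplacian_def sum_negf)

lemma comb_laplacian_zero: "comb_laplacian w 0 x = 0"
  by (simp add: comb_laplacian_def)

lemma reachable_refl: "reachable w x x"
  by (simp add: reachable_def)

lemma reachable_trans: "reachable w x y \<Longrightarrow> reachable w y z \<Longrightarrow> reachable w x z"
  unfolding reachable_def by simp

lemma reachable_neighbor: "reachable w x y \<Longrightarrow> z \<in> neighbors w y \<Longrightarrow> reachable w x z"
  unfolding reachable_def neighbors_def by (simp add: rtranclp.rtrancl_into_rtrancl)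

lemma mem_component_self: "x \<in> component w x"
  by (simp add: component_def reachable_refl)

primrec graph_ball :: "('a \<Rightarrow> 'a \<Rightarrow> real) \<Rightarrow> 'a \<Rightarrow> nat \<Rightarrow> 'a set" where
  "graph_ball w x 0 = {x}"
| "graph_ball w x (Suc n) = graph_ball w x n \<union> (\<Union>y\<in>graph_ball w x n. neighbors w y)"

lemma mono_graph_ball: "mono (graph_ball w x)"
  by (rule monoI, rule lift_Suc_mono_le[of "graph_ball w x"]) auto

lemma graph_ball_subset_component: "graph_ball w x n \<subseteq> component w x"
  by (induction n) (auto simp: component_def reachable_refl intro: reachable_neighbor)

lemma component_subset_Union_graph_ball: "component w x \<subseteq> (\<Union>n. graph_ball w x n)"
proof
  fix y assume "y \<in> component w x"
  then have "(adj w)\<^sup>*\<^sup>* x y" by (simp add: component_def reachable_def)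
  then show "y \<in> (\<Union>n. graph_ball w x n)"
  proof (induction rule: rtranclp_induct)
    case base
    have "x \<in> graph_ball w x 0" by simp
    then show ?case by (rule UN_I[OF UNIV_I])
  next
    case (step y z)
    then obtain n where "y \<in> graph_ball w x n" by blast
    then have "z \<in> graph_ball w x (Suc n)" using step(2) by (auto simp: neighbors_def)
    then show ?case by (rule UN_I[OF UNIV_I])
  qed
qed

locale lf_weighted_graph =
  fixes w :: "'a \<Rightarrow> 'a \<Rightarrow> real"
  assumes weighted_graph: "weighted_graph w"
    and locally_finite: "locally_finite w"
    and neighbors_nonempty: "\<And>x. neighbors w x \<noteq> {}"
begin

lemma w_sym: "w x y = w y x"
  using weighted_graph by (simp add: weighted_graph_def)

lemma finite_neighbors: "finite (neighbors w x)"
  using locally_finite by (simp add: locally_finite_def)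

lemma mem_neighbors_iff: "y \<in> neighbors w x \<longleftrightarrow> 0 < w x y"
  by (simp add: neighbors_def adj_def)

lemma w_nonneg: "0 \<le> w x y"
  using weighted_graph by (simp add: weighted_graph_def)

lemma w_eq_0_if_not_neighbor: "y \<notin> neighbors w x \<Longrightarrow> w x y = 0"
  using w_nonneg[of x y] by (simp add: mem_neighbors_iff)

lemma deg_pos: "0 < deg w x"
  unfolding deg_def using finite_neighbors neighbors_nonempty
  by (intro sum_pos) (auto simp: mem_neighbors_iff)

lemma deg_neq_0: "deg w x \<noteq> 0"
  using deg_pos[of x] by simp

lemma laplacian_eq_comb_laplacian: "laplacian w f x = comb_laplacian w f x / deg w x"
  using deg_pos[of x] by (simp add: laplacian_def comb_laplacian_def field_simps)

lemma finite_graph_ball: "finite (graph_ball w x n)"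
  by (induction n) (auto simp: finite_neighbors)

lemma reachable_sym: "reachable w x y \<Longrightarrow> reachable w y x"
  unfolding reachable_def
proof (induction rule: rtranclp_induct)
  case (step y z)
  then have "adj w z y" by (simp add: adj_def w_sym)
  then show ?case using step(3) by (rule converse_rtranclp_into_rtranclp)
qed simp

lemma component_neighbor:
  assumes "y \<in> neighbors w x"
  shows "component w y = component w x"
proof -
  have xy: "reachable w x y" using reachable_neighbor[OF reachable_refl assms] .
  show ?thesis
    unfolding component_def using reachable_trans[OF xy] reachable_trans[OF reachable_sym[OF xy]]
    by blast
qed

lemma neighbors_subset_component: "y \<in> component w x \<Longrightarrow> neighbors w y \<subseteq> component w x"
  by (auto simp: component_def intro: reachable_neighbor)

lemma harmonic_max_propagates:
  assumes max: "\<And>y. f y \<le> f a"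
    and harmonic: "\<And>z. f z = f a \<Longrightarrow> comb_laplacian w f z = 0"
    and "reachable w a z"
  shows "f z = f a"
  using \<open>reachable w a z\<close> unfolding reachable_def
proof (induction rule: rtranclp_induct)
  case (step y z)
  have "(\<Sum>u\<in>neighbors w y. w y u * (f y - f u)) = 0"
    using harmonic[OF step(3)] by (simp add: comb_laplacian_eq_sum)
  moreover have "0 \<le> w y u * (f y - f u)" for u
    using w_nonneg[of y u] max[of u] step(3) by simp
  ultimately have "\<forall>u\<in>neighbors w y. w y u * (f y - f u) = 0"
    using sum_nonneg_eq_0_iff[OF finite_neighbors, where f="\<lambda>u. w y u * (f y - f u)"] by simp
  moreover have z: "z \<in> neighbors w y" using step(2) by (simp add: neighbors_def)
  ultimately have "w y z * (f y - f z) = 0" by blast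
  then show ?case using z step(3) by (simp add: mem_neighbors_iff)
qed simp

lemma max_principle:
  assumes "finite A" and escape: "\<And>a. a \<in> A \<Longrightarrow> \<exists>z. z \<notin> A \<and> reachable w a z"
    and zero: "\<And>x. x \<notin> A \<Longrightarrow> f x = 0"
    and harmonic: "\<And>x. x \<in> A \<Longrightarrow> comb_laplacian w f x = 0"
  shows "f x \<le> 0"
proof (rule ccontr)
  assume "\<not> f x \<le> 0"
  then have "x \<in> A" using zero by force
  have "Max (f ` A) \<in> f ` A" using \<open>finite A\<close> \<open>x \<in> A\<close> by (intro Max_in) auto
  then obtain a where a: "Max (f ` A) = f a" "a \<in> A" by (rule imageE)
  have max_A: "f y \<le> f a" if "y \<in> A" for y
    using Max_ge[of "f ` A" "f y"] \<open>finite A\<close> that a(1) by simp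
  have pos: "0 < f a" using max_A[OF \<open>x \<in> A\<close>] \<open>\<not> f x \<le> 0\<close> by simp
  have max: "f y \<le> f a" for y
    using max_A zero[of y] pos by (cases "y \<in> A") auto
  have "comb_laplacian w f z = 0" if "f z = f a" for z
    using harmonic zero that pos by (metis less_irrefl)
  moreover obtain z where "z \<notin> A" "reachable w a z" using escape[OF a(2)] by blast
  ultimately have "f z = f a" using harmonic_max_propagates max by blast
  then show False using zero[OF \<open>z \<notin> A\<close>] pos by simp
qed

lemma dirichlet_problem_uniqueness:
  assumes "finite A" and escape: "\<And>a. a \<in> A \<Longrightarrow> \<exists>z. z \<notin> A \<and> reachable w a z"
    and zero: "\<And>x. x \<notin> A \<Longrightarrow> f x = 0"
    and harmonic: "\<And>x. x \<in> A \<Longrightarrow> comb_laplacian w f x = 0"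
  shows "f = 0"
proof
  fix x
  have "f x \<le> 0"
    using max_principle[OF \<open>finite A\<close> escape zero harmonic] .
  moreover have "- f x \<le> 0"
    using max_principle[OF \<open>finite A\<close> escape, of "- f"] zero harmonic
    by (simp add: comb_laplacian_uminus)
  ultimately show "f x = 0 x" by simp
qed

lemma dirichlet_problem_solvable:
  assumes "finite A" and escape: "\<And>a. a \<in> A \<Longrightarrow> \<exists>z. z \<notin> A \<and> reachable w a z"
  shows "\<exists>f. \<forall>x\<in>A. comb_laplacian w f x = h x"
proof -
  define L where "L f = (\<lambda>x. if x \<in> A then comb_laplacian w f x else 0)" for f
  have hom: "module_hom scale_fun scale_fun L"
    unfolding module_hom_iff
    by (auto simp: L_def fun_eq_iff comb_laplacian_add comb_laplacian_scale[unfolded scale_fun_def]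
        scale_fun_def fun_space.module_axioms)
  interpret L: module_hom scale_fun scale_fun L by (rule hom)
  have "f = 0" if "f \<in> supported_on A" "L f = 0" for f
  proof (rule dirichlet_problem_uniqueness[OF \<open>finite A\<close> escape])
    show "f x = 0" if "x \<notin> A" for x
      using \<open>f \<in> supported_on A\<close> that by (simp add: supported_on_def)
    show "comb_laplacian w f x = 0" if "x \<in> A" for x
      using fun_cong[OF \<open>L f = 0\<close>, of x] that by (simp add: L_def)
  qed
  then have "inj_on L (supported_on A)"
    using L.inj_on_iff_eq_0[OF subspace_supported_on] by blast
  moreover have "L ` supported_on A \<subseteq> supported_on A"
    by (auto simp: L_def supported_on_def)
  ultimately have "L ` supported_on A = supported_on A"
    using fun_space.linear_inj_on_imp_image_eq[OF _ supported_on_subset_span[OF \<open>finite A\<close>]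
        subspace_supported_on hom] \<open>finite A\<close> by blast
  moreover have "(\<lambda>x. if x \<in> A then h x else 0) \<in> supported_on A"
    by (simp add: supported_on_def)
  ultimately obtain f where f: "L f = (\<lambda>x. if x \<in> A then h x else 0)"
    by (metis imageE)
  have "comb_laplacian w f x = h x" if "x \<in> A" for x
    using fun_cong[OF f, of x] that by (simp add: L_def)
  then show ?thesis by blast
qed

lemma escape_from_finite_subset_of_infinite_component:
  assumes "infinite (component w x0)" and "finite A" and "A \<subseteq> component w x0" and "a \<in> A"
  shows "\<exists>z. z \<notin> A \<and> reachable w a z"
proof -
  obtain z where z: "reachable w x0 z" "z \<notin> A"
    using assms(1,2) finite_subset[of "component w x0" A] by (auto simp: component_def)
  have "reachable w x0 a" using assms(3,4) by (auto simp: component_def)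
  then have "reachable w a z" using reachable_trans[OF reachable_sym z(1)] by blast
  with z(2) show ?thesis by blast
qed

lemma solvable_on_infinite_component:
  assumes "infinite (component w x0)"
  shows "\<exists>f. \<forall>x\<in>component w x0. comb_laplacian w f x = h x"
proof -
  define A where "A n = graph_ball w x0 n" for n
  define S where "S n = {f. \<forall>x\<in>A n. comb_laplacian w f x = h x}" for n
  define K where "K n = {f. \<forall>x\<in>A n. comb_laplacian w f x = 0}" for n
  have A_mono: "m \<le> n \<Longrightarrow> A m \<subseteq> A n" for m n
    unfolding A_def by (rule monoD[OF mono_graph_ball])
  have escape: "\<exists>z. z \<notin> A n \<and> reachable w a z" if "a \<in> A n" for a n
    using escape_from_finite_subset_of_infinite_component[OF assms finite_graph_ball
        graph_ball_subset_component] that unfolding A_def .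
  have "\<exists>f. \<forall>k. \<exists>s\<in>S k. \<forall>x\<in>A (Suc k). f x = s x"
  proof (rule exists_fun_agreeing_with_nested_cosets)
    show "finite (A (Suc k))" for k unfolding A_def by (rule finite_graph_ball)
    show "mono (\<lambda>k. A (Suc k))"
      using A_mono by (simp add: mono_def)
    show "S n \<noteq> {}" for n
      using dirichlet_problem_solvable[OF finite_graph_ball escape[unfolded A_def], of n h]
      by (auto simp: S_def A_def)
    show "antimono S" "antimono K"
      unfolding antimono_def S_def K_def using A_mono by blast+
    show "fun_space.subspace (K n)" for n
      by (auto simp: fun_space.subspace_def K_def comb_laplacian_add comb_laplacian_scale
          comb_laplacian_zero)
    show "s - s' \<in> K n" if "s \<in> S n" "s' \<in> S n" for n s s'
      using that by (simp add: S_def K_def comb_laplacian_diff)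
    show "s + q \<in> S n" if "s \<in> S n" "q \<in> K n" for n s q
      using that by (simp add: S_def K_def comb_laplacian_add)
  qed
  then obtain f where f: "\<And>k. \<exists>s\<in>S k. \<forall>x\<in>A (Suc k). f x = s x" by blast
  have "comb_laplacian w f x = h x" if x: "x \<in> component w x0" for x
  proof -
    obtain k where "x \<in> A k"
      using component_subset_Union_graph_ball[of w x0] x unfolding A_def by blast
    moreover obtain s where "s \<in> S k" "\<forall>y\<in>A (Suc k). f y = s y" using f by blast
    moreover have "insert x (neighbors w x) \<subseteq> A (Suc k)"
      using \<open>x \<in> A k\<close> by (auto simp: A_def)
    ultimately show ?thesis
      using comb_laplacian_cong[of x w f s] by (auto simp: S_def)
  qed
  then show ?thesis by blast
qed

lemma surj_laplacian_if_infinite_components: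
  assumes "\<And>x. infinite (component w x)"
  shows "surj (laplacian w)"
proof (rule surjI)
  fix g :: "'a \<Rightarrow> real"
  define h where "h x = deg w x * g x" for x
  define solution where
    "solution C = (SOME f. \<forall>x\<in>C. comb_laplacian w f x = h x)" for C
  have solution: "comb_laplacian w (solution (component w x)) y = h y"
    if "y \<in> component w x" for x y
    using someI_ex[OF solvable_on_infinite_component[OF assms]] that
    unfolding solution_def by blast
  define f where "f x = solution (component w x) x" for x
  have "comb_laplacian w f x = comb_laplacian w (solution (component w x)) x" for x
    by (rule comb_laplacian_cong) (auto simp: f_def component_neighbor)
  then have "comb_laplacian w f x = deg w x * g x" for x
    using solution[OF mem_component_self] by (simp add: h_def)
  then show "laplacian w f = g"
    by (simp add: fun_eq_iff laplacian_eq_comb_laplacian deg_neq_0)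
qed

lemma sum_comb_laplacian_finite_component:
  assumes "finite (component w x0)"
  shows "(\<Sum>x\<in>component w x0. comb_laplacian w f x) = 0"
proof -
  define C where "C = component w x0"
  define S where "S = (\<Sum>x\<in>C. \<Sum>y\<in>C. w x y * (f x - f y))"
  have "comb_laplacian w f x = (\<Sum>y\<in>C. w x y * (f x - f y))" if "x \<in> C" for x
    unfolding comb_laplacian_eq_sum
    using assms neighbors_subset_component[OF that[unfolded C_def]]
    by (intro sum.mono_neutral_left) (auto simp: C_def w_eq_0_if_not_neighbor)
  then have sum_eq: "(\<Sum>x\<in>C. comb_laplacian w f x) = S"
    by (simp add: S_def)
  have "S = (\<Sum>y\<in>C. \<Sum>x\<in>C. w x y * (f x - f y))"
    unfolding S_def by (rule sum.swap)
  also have "\<dots> = - S"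
    by (simp add: S_def w_sym algebra_simps sum_negf[symmetric])
  finally show ?thesis using sum_eq by (simp add: C_def)
qed

lemma infinite_component_if_surj_laplacian:
  assumes "surj (laplacian w)"
  shows "infinite (component w x)"
proof
  assume fin: "finite (component w x)"
  obtain f where f: "laplacian w f = (\<lambda>_. 1)" using assms by (metis surjD)
  have "comb_laplacian w f y = deg w y" for y
    using fun_cong[OF f, of y] deg_neq_0[of y] by (simp add: laplacian_eq_comb_laplacian field_simps)
  then have "(\<Sum>y\<in>component w x. deg w y) = 0"
    using sum_comb_laplacian_finite_component[OF fin, of f] by simp
  moreover have "(\<Sum>y\<in>component w x. deg w y) > 0"
    using fin mem_component_self[of x w] deg_pos by (intro sum_pos) auto
  ultimately show False by simp
qed

end

theorem proposition1p5:
  fixes w :: "'a \<Rightarrow> 'a \<Rightarrow> real"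
  assumes "weighted_graph w"
    and "locally_finite w"
    and "\<forall>x. neighbors w x \<noteq> {}"
  shows "(connected_graph w \<and> infinite (UNIV :: 'a set) \<longrightarrow> surj (laplacian w))
       \<and> (surj (laplacian w) \<longleftrightarrow> (\<forall>x. infinite (component w x)))"
proof -
  interpret lf_weighted_graph w using assms by unfold_locales auto
  have "surj (laplacian w) \<longleftrightarrow> (\<forall>x. infinite (component w x))"
    using surj_laplacian_if_infinite_components infinite_component_if_surj_laplacian by blast
  moreover have "component w x = UNIV" if "connected_graph w" for x
    using that by (auto simp: connected_graph_def component_def)
  ultimately show ?thesis by auto
qed

end
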